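(* Let $m,n\ge 2$ be integers. Then $IDI(P_m\square P_n)=2$ if $(m,n)\neq(2,2)$, and $IDI(P_2\square P_2)=3$.
   Context: $P_k$ is the path on $k$ vertices and $\square$ the Cartesian product, so $P_m\square P_n$ is the $m\times n$ grid. For a finite simple connected graph $G=(V,E)$ with diameter $d$, a rank assignment is a function $f:V\to\mathbb{R}$; under $f$, the string of a vertex $v$ is the $d$-vector whose $i$-th coordinate is the sum of $f(w)$ over all vertices $w$ with $d(v,w)=i$. The ID-index $IDI(G)$ is the minimum $k$ such that there exists $f:V\to\mathbb{R}$ with $|f(V)|=k$ under which all vertices have distinct strings. *)

theory Defs
  imports Complex_Main
begin

text \<open>A finite simple graph is given by a vertex set V and a symmetric irreflexive
adjacency relation E (only its restriction to V matters).\<close>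

definition is_walk :: "'a set \<Rightarrow> ('a \<Rightarrow> 'a \<Rightarrow> bool) \<Rightarrow> 'a list \<Rightarrow> bool" where
  "is_walk V E xs \<longleftrightarrow> xs \<noteq> [] \<and> set xs \<subseteq> V \<and>
     (\<forall>i. Suc i < length xs \<longrightarrow> E (xs ! i) (xs ! Suc i))"

definition gdist :: "'a set \<Rightarrow> ('a \<Rightarrow> 'a \<Rightarrow> bool) \<Rightarrow> 'a \<Rightarrow> 'a \<Rightarrow> nat" where
  "gdist V E u v = (LEAST k. \<exists>xs. is_walk V E xs \<and> hd xs = u \<and> last xs = v \<and> length xs = Suc k)"

definition diameter :: "'a set \<Rightarrow> ('a \<Rightarrow> 'a \<Rightarrow> bool) \<Rightarrow> nat" where
  "diameter V E = Max {gdist V E u v | u v. u \<in> V \<and> v \<in> V}"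

definition vstring :: "'a set \<Rightarrow> ('a \<Rightarrow> 'a \<Rightarrow> bool) \<Rightarrow> ('a \<Rightarrow> real) \<Rightarrow> 'a \<Rightarrow> real list" where
  "vstring V E f v = map (\<lambda>i. \<Sum>w\<in>{w\<in>V. gdist V E v w = i}. f w) [1..<Suc (diameter V E)]"

definition IDI :: "'a set \<Rightarrow> ('a \<Rightarrow> 'a \<Rightarrow> bool) \<Rightarrow> nat" where
  "IDI V E = (LEAST k. \<exists>f :: 'a \<Rightarrow> real. card (f ` V) = k \<and> inj_on (vstring V E f) V)"

definition grid_V :: "nat \<Rightarrow> nat \<Rightarrow> (nat \<times> nat) set" where
  "grid_V m n = {0..<m} \<times> {0..<n}"

definition grid_E :: "(nat \<times> nat) \<Rightarrow> (nat \<times> nat) \<Rightarrow> bool" where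
  "grid_E p q \<longleftrightarrow> (fst p = fst q \<and> (snd p = Suc (snd q) \<or> snd q = Suc (snd p))) \<or>
                   (snd p = snd q \<and> (fst p = Suc (fst q) \<or> fst q = Suc (fst p)))"

end

theory Submission
  imports Defs "HOL-Library.Multiset" "HOL-Library.Indicator_Function"
begin

(* In the grid, graph distance is Manhattan distance.  Under the indicator of a vertex set S,
   the string of v counts, for every k >= 1, the vertices of S at distance k from v; since the
   number at distance 0 is then |S| minus the rest, the string determines the multiset of
   distances from v to S.  For n >= 4, n = 3 and n = 2 (with m >= 3) an explicit triple S makes
   these multisets pairwise distinct, which gives a two-valued resolving assignment.
   Conversely, any automorphism preserving f maps each vertex to one with the same string:
   a constant f is preserved by a reflection of the grid, and on P_2 x P_2 every assignment
   with at most two values is preserved by a nontrivial symmetry of the square, while an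
   explicit three-valued assignment resolves it. *)

section \<open>Strings, layer sums and the ID-index\<close>

lemma is_walk_Cons:
  "is_walk V E (x # xs) \<longleftrightarrow> x \<in> V \<and> (xs = [] \<or> E x (hd xs) \<and> is_walk V E xs)"
  unfolding is_walk_def by (cases xs) (auto simp: nth_Cons split: nat.splits)

definition layer_sum :: "'a set \<Rightarrow> ('a \<Rightarrow> 'a \<Rightarrow> bool) \<Rightarrow> ('a \<Rightarrow> real) \<Rightarrow> 'a \<Rightarrow> nat \<Rightarrow> real" where
  "layer_sum V E f v k = (\<Sum>w\<in>{w\<in>V. gdist V E v w = k}. f w)"

lemma gdist_le_diameter:
  assumes "finite V" "u \<in> V" "v \<in> V"
  shows "gdist V E u v \<le> diameter V E"
proof -
  have "{gdist V E u v | u v. u \<in> V \<and> v \<in> V} = case_prod (gdist V E) ` (V \<times> V)"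
    by auto
  then show ?thesis
    unfolding diameter_def using assms by (intro Max_ge) auto
qed

lemma layer_sum_beyond_diameter:
  assumes "finite V" "v \<in> V" "diameter V E < k"
  shows "layer_sum V E f v k = 0"
proof -
  have "gdist V E v w \<noteq> k" if "w \<in> V" for w
    using gdist_le_diameter[OF assms(1,2) that, of E] assms(3) by linarith
  then have "{w\<in>V. gdist V E v w = k} = {}" by blast
  then show ?thesis unfolding layer_sum_def by (simp only: sum.empty)
qed

lemma vstring_eq_iff:
  assumes "finite V" "u \<in> V" "v \<in> V"
  shows "vstring V E f u = vstring V E f v \<longleftrightarrow>
    (\<forall>k\<ge>1. layer_sum V E f u k = layer_sum V E f v k)"
proof -
  have "vstring V E f u = vstring V E f v \<longleftrightarrow>
      (\<forall>k\<in>{1..<Suc (diameter V E)}. layer_sum V E f u k = layer_sum V E f v k)"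
    unfolding vstring_def layer_sum_def[symmetric] map_eq_conv set_upt ..
  also have "\<dots> \<longleftrightarrow> (\<forall>k\<ge>1. layer_sum V E f u k = layer_sum V E f v k)"
    using layer_sum_beyond_diameter[OF assms(1)] assms(2,3) by (auto simp: not_le)
  finally show ?thesis .
qed

lemma layer_sum_indicator:
  assumes "finite V" "S \<subseteq> V"
  shows "layer_sum V E (indicator S) v k = count (image_mset (gdist V E v) (mset_set S)) k"
proof -
  have "finite S" using assms finite_subset by blast
  have "layer_sum V E (indicator S) v k = card ({w\<in>V. gdist V E v w = k} \<inter> S)"
    unfolding layer_sum_def
    using assms(1) sum_mult_indicator[of "{w\<in>V. gdist V E v w = k}" "\<lambda>_. 1 :: real" S] by simp
  also have "{w\<in>V. gdist V E v w = k} \<inter> S = gdist V E v -` {k} \<inter> S"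
    using assms(2) by auto
  also have "card \<dots> = count (image_mset (gdist V E v) (mset_set S)) k"
    using \<open>finite S\<close> by (simp add: count_image_mset)
  finally show ?thesis .
qed

lemma mset_eq_if_positive_parts_eq:
  fixes M N :: "nat multiset"
  assumes "size M = size N" "filter_mset ((<) 0) M = filter_mset ((<) 0) N"
  shows "M = N"
proof (rule multiset_eqI)
  have size_split: "size K = size (filter_mset ((<) 0) K) + count K 0" for K :: "nat multiset"
  proof -
    have "filter_mset (\<lambda>x. \<not> 0 < x) K = filter_mset (\<lambda>x. x = 0) K"
      by (simp only: not_gr0)
    also have "\<dots> = replicate_mset (count K 0) 0"
      by (rule filter_eq_replicate_mset)
    finally have "filter_mset (\<lambda>x. \<not> 0 < x) K = replicate_mset (count K 0) 0" .
    moreover have "size K = size (filter_mset ((<) 0) K) + size (filter_mset (\<lambda>x. \<not> 0 < x) K)"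
      by (metis multiset_partition size_union)
    ultimately show ?thesis by simp
  qed
  fix x
  show "count M x = count N x"
  proof (cases "x = 0")
    case True
    then show ?thesis using assms size_split[of M] size_split[of N] by simp
  next
    case False
    then show ?thesis using arg_cong[OF assms(2), of "\<lambda>K. count K x"] by simp
  qed
qed

lemma inj_on_vstring_indicator:
  assumes "finite V" "S \<subseteq> V"
    and "\<And>u v. u \<in> V \<Longrightarrow> v \<in> V \<Longrightarrow>
      image_mset (gdist V E u) (mset_set S) = image_mset (gdist V E v) (mset_set S) \<Longrightarrow> u = v"
  shows "inj_on (vstring V E (indicator S)) V"
proof (rule inj_onI)
  fix u v
  assume uv: "u \<in> V" "v \<in> V" and eq: "vstring V E (indicator S) u = vstring V E (indicator S) v"
  let ?D = "\<lambda>x. image_mset (gdist V E x) (mset_set S)"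
  have "filter_mset ((<) 0) (?D u) = filter_mset ((<) 0) (?D v)"
  proof (rule multiset_eqI)
    fix k
    have "count (?D u) k = count (?D v) k" if "0 < k"
    proof -
      have "layer_sum V E (indicator S) u k = layer_sum V E (indicator S) v k"
        using eq that vstring_eq_iff[OF assms(1) uv] by simp
      then show ?thesis by (simp add: layer_sum_indicator[OF assms(1,2)])
    qed
    then show "count (filter_mset ((<) 0) (?D u)) k = count (filter_mset ((<) 0) (?D v)) k"
      by simp
  qed
  then have "?D u = ?D v" by (rule mset_eq_if_positive_parts_eq[rotated]) simp
  then show "u = v" using assms(3) uv by blast
qed

lemma vstring_automorphism:
  assumes "bij_betw \<sigma> V V"
    and "\<And>x y. x \<in> V \<Longrightarrow> y \<in> V \<Longrightarrow> gdist V E (\<sigma> x) (\<sigma> y) = gdist V E x y"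
    and "\<And>x. x \<in> V \<Longrightarrow> f (\<sigma> x) = f x"
    and "u \<in> V"
  shows "vstring V E f (\<sigma> u) = vstring V E f u"
proof -
  have "layer_sum V E f (\<sigma> u) k = layer_sum V E f u k" for k
  proof -
    have "{w\<in>V. gdist V E (\<sigma> u) w = k} = \<sigma> ` {w\<in>V. gdist V E u w = k}"
    proof (intro equalityI subsetI)
      fix x
      assume x: "x \<in> {w\<in>V. gdist V E (\<sigma> u) w = k}"
      then obtain y where "y \<in> V" "x = \<sigma> y"
        using assms(1) by (auto simp: bij_betw_def)
      with x assms(2,4) show "x \<in> \<sigma> ` {w\<in>V. gdist V E u w = k}" by auto
    qed (use assms(1,2,4) in \<open>auto simp: bij_betw_def\<close>)
    moreover have "inj_on \<sigma> {w\<in>V. gdist V E u w = k}"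
      using assms(1) by (auto simp: bij_betw_def intro: inj_on_subset)
    ultimately show ?thesis
      unfolding layer_sum_def using assms(3) by (simp add: sum.reindex)
  qed
  then show ?thesis
    unfolding vstring_def layer_sum_def[symmetric] by simp
qed

lemma IDI_eqI:
  assumes "\<exists>f. card (f ` V) = k \<and> inj_on (vstring V E f) V"
    and "\<And>f. inj_on (vstring V E f) V \<Longrightarrow> k \<le> card (f ` V)"
  shows "IDI V E = k"
  unfolding IDI_def using assms by (intro Least_equality) auto

lemma card_indicator_image:
  assumes "x \<in> S" "y \<in> V - S" "S \<subseteq> V"
  shows "card ((indicator S :: 'a \<Rightarrow> real) ` V) = 2"
proof -
  have "(indicator S :: 'a \<Rightarrow> real) ` V = {0, 1}"
    using assms by (auto simp: indicator_def image_iff)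
  then show ?thesis by simp
qed

section \<open>Distances in the grid\<close>

definition manhattan :: "nat \<times> nat \<Rightarrow> nat \<times> nat \<Rightarrow> nat" where
  "manhattan p q = nat (\<bar>int (fst p) - int (fst q)\<bar> + \<bar>int (snd p) - int (snd q)\<bar>)"

lemma manhattan_triangle: "manhattan x z \<le> manhattan x y + manhattan y z"
  unfolding manhattan_def by (simp add: nat_add_distrib[symmetric] nat_le_eq_zle)

lemma manhattan_grid_E: "grid_E x y \<Longrightarrow> manhattan x y = 1"
  unfolding grid_E_def manhattan_def by auto

lemma manhattan_hd_last_less_length:
  "is_walk V grid_E xs \<Longrightarrow> manhattan (hd xs) (last xs) < length xs"
proof (induction xs)
  case Nil
  then show ?case by (simp add: is_walk_def)
next
  case (Cons x xs)
  show ?case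
  proof (cases xs)
    case Nil
    then show ?thesis by (simp add: manhattan_def)
  next
    case (Cons y ys)
    with Cons.prems have "grid_E x y" "is_walk V grid_E xs"
      by (simp_all add: is_walk_Cons)
    then have "manhattan y (last xs) < length xs"
      using Cons.IH \<open>xs = y # ys\<close> by simp
    moreover have "manhattan x (last xs) \<le> 1 + manhattan y (last xs)"
      using manhattan_triangle[of x "last xs" y] manhattan_grid_E[OF \<open>grid_E x y\<close>] by simp
    ultimately show ?thesis using \<open>xs = y # ys\<close> by simp
  qed
qed

lemma grid_walk_exists:
  assumes "u \<in> grid_V m n" "v \<in> grid_V m n"
  shows "\<exists>xs. is_walk (grid_V m n) grid_E xs \<and> hd xs = u \<and> last xs = v \<and>
      length xs = Suc (manhattan u v)"
  using assms
proof (induction "manhattan u v" arbitrary: u)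
  case 0
  then have "u = v" by (auto simp: manhattan_def prod_eq_iff)
  with 0 show ?case by (intro exI[of _ "[u]"]) (simp add: is_walk_def)
next
  case (Suc d)
  obtain a b c e where u: "u = (a, b)" and v: "v = (c, e)" by fastforce
  define u' where "u' = (if a < c then (Suc a, b) else if c < a then (a - 1, b)
      else if b < e then (a, Suc b) else (a, b - 1))"
  have "u \<noteq> v" using Suc(2) by (auto simp: manhattan_def)
  then have "u' \<in> grid_V m n" "grid_E u u'" "manhattan u' v = d"
    using Suc(2-4) unfolding u v u'_def grid_V_def grid_E_def manhattan_def
    by auto
  with Suc(1)[of u'] Suc(4) obtain xs where
    "is_walk (grid_V m n) grid_E xs" "hd xs = u'" "last xs = v" "length xs = Suc d"
    by auto
  with Suc(2,3) \<open>grid_E u u'\<close> show ?case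
    by (intro exI[of _ "u # xs"]) (auto simp: is_walk_Cons)
qed

lemma gdist_grid:
  assumes "u \<in> grid_V m n" "v \<in> grid_V m n"
  shows "gdist (grid_V m n) grid_E u v = manhattan u v"
  unfolding gdist_def
proof (rule Least_equality)
  show "\<exists>xs. is_walk (grid_V m n) grid_E xs \<and> hd xs = u \<and> last xs = v \<and> length xs = Suc (manhattan u v)"
    using grid_walk_exists[OF assms] .
next
  fix k
  assume "\<exists>xs. is_walk (grid_V m n) grid_E xs \<and> hd xs = u \<and> last xs = v \<and> length xs = Suc k"
  then show "manhattan u v \<le> k"
    using manhattan_hd_last_less_length by fastforce
qed

lemma finite_grid_V: "finite (grid_V m n)"
  by (simp add: grid_V_def)

lemma grid_V_2_2: "grid_V 2 2 = {(0, 0), (0, 1), (1, 0), (1, 1)}"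
  by (auto simp: grid_V_def)

lemma int_manhattan:
  "int (manhattan (i, j) (a, b)) = \<bar>int i - int a\<bar> + \<bar>int j - int b\<bar>"
  by (simp add: manhattan_def)

lemma layer_sum_grid:
  assumes "v \<in> grid_V m n"
  shows "layer_sum (grid_V m n) grid_E f v k = (\<Sum>w\<in>grid_V m n. if manhattan v w = k then f w else 0)"
  unfolding layer_sum_def sum.inter_filter[OF finite_grid_V]
  using assms by (intro sum.cong) (simp_all add: gdist_grid)

section \<open>Resolving assignments of the grid\<close>

lemma inj_on_vstring_grid_indicator3:
  assumes "{s1, s2, s3} \<subseteq> grid_V m n" "distinct [s1, s2, s3]"
    and "\<And>u v. u \<in> grid_V m n \<Longrightarrow> v \<in> grid_V m n \<Longrightarrow>
      {#manhattan u s1, manhattan u s2, manhattan u s3#} =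
      {#manhattan v s1, manhattan v s2, manhattan v s3#} \<Longrightarrow> u = v"
  shows "inj_on (vstring (grid_V m n) grid_E (indicator {s1, s2, s3})) (grid_V m n)"
proof (rule inj_on_vstring_indicator[OF finite_grid_V assms(1)])
  fix u v
  assume uv: "u \<in> grid_V m n" "v \<in> grid_V m n"
    and eq: "image_mset (gdist (grid_V m n) grid_E u) (mset_set {s1, s2, s3}) =
      image_mset (gdist (grid_V m n) grid_E v) (mset_set {s1, s2, s3})"
  have "mset_set {s1, s2, s3} = {#s1, s2, s3#}"
    using assms(2) by auto
  with eq uv assms(1) show "u = v"
    by (intro assms(3)) (simp_all add: gdist_grid)
qed

(* A multiset of three elements is determined by its sum and its underlying set,
   so the conclusions below retain all the information of the hypothesis. *)
lemma mset3_eqD: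
  fixes a b c a' b' c' :: "'a :: comm_monoid_add"
  assumes "{#a, b, c#} = {#a', b', c'#}"
  shows "a + b + c = a' + b' + c'"
    and "a = a' \<or> a = b' \<or> a = c'" "b = a' \<or> b = b' \<or> b = c'" "c = a' \<or> c = b' \<or> c = c'"
    and "a' = a \<or> a' = b \<or> a' = c" "b' = a \<or> b' = b \<or> b' = c" "c' = a \<or> c' = b \<or> c' = c"
  using arg_cong[OF assms, of sum_mset] arg_cong[OF assms, of set_mset] by (auto simp: ac_simps)

lemma width_ge4_grid_distances_inj:
  fixes i j i' j' n :: int
  assumes "{#i + j, i + \<bar>j - 1\<bar>, i + \<bar>j - (n - 1)\<bar>#} =
      {#i' + j', i' + \<bar>j' - 1\<bar>, i' + \<bar>j' - (n - 1)\<bar>#}"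
    and "4 \<le> n" "0 \<le> i" "0 \<le> j" "j < n" "0 \<le> i'" "0 \<le> j'" "j' < n"
  shows "i = i' \<and> j = j'"
  using mset3_eqD[OF assms(1)] assms(2-) by (smt (z3))

lemma width3_grid_distances_inj:
  fixes i j i' j' :: int
  assumes "{#i + j, i + \<bar>j - 2\<bar>, \<bar>i - 1\<bar> + j#} = {#i' + j', i' + \<bar>j' - 2\<bar>, \<bar>i' - 1\<bar> + j'#}"
    and "0 \<le> i" "0 \<le> j" "j < 3" "0 \<le> i'" "0 \<le> j'" "j' < 3"
  shows "i = i' \<and> j = j'"
  using mset3_eqD[OF assms(1)] assms(2-) by (smt (z3))

lemma width2_grid_distances_inj:
  fixes i j i' j' :: int
  assumes "{#i + j, i + \<bar>j - 1\<bar>, \<bar>i - 2\<bar> + j#} = {#i' + j', i' + \<bar>j' - 1\<bar>, \<bar>i' - 2\<bar> + j'#}"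
    and "0 \<le> i" "0 \<le> j" "j < 2" "0 \<le> i'" "0 \<le> j'" "j' < 2"
  shows "i = i' \<and> j = j'"
  using mset3_eqD[OF assms(1)] assms(2-) by (smt (z3))

lemma width_ge4_grid_resolving_triple:
  assumes "4 \<le> n" "0 < m"
  shows "inj_on (vstring (grid_V m n) grid_E (indicator {(0, 0), (0, 1), (0, n - 1)})) (grid_V m n)"
proof (rule inj_on_vstring_grid_indicator3)
  fix u v
  assume "u \<in> grid_V m n" "v \<in> grid_V m n"
    and eq: "{#manhattan u (0, 0), manhattan u (0, 1), manhattan u (0, n - 1)#} =
      {#manhattan v (0, 0), manhattan v (0, 1), manhattan v (0, n - 1)#}"
  then obtain i j i' j' where ij: "u = (i, j)" "v = (i', j')" "j < n" "j' < n"
    by (auto simp: grid_V_def)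
  have "{#int i + int j, int i + \<bar>int j - 1\<bar>, int i + \<bar>int j - (int n - 1)\<bar>#} =
      {#int i' + int j', int i' + \<bar>int j' - 1\<bar>, int i' + \<bar>int j' - (int n - 1)\<bar>#}"
    using arg_cong[OF eq, of "image_mset int"] assms(1) unfolding ij by (simp add: int_manhattan of_nat_diff)
  from width_ge4_grid_distances_inj[OF this] show "u = v"
    using assms(1) ij by simp
qed (use assms in \<open>auto simp: grid_V_def\<close>)

lemma width3_grid_resolving_triple:
  assumes "2 \<le> m"
  shows "inj_on (vstring (grid_V m 3) grid_E (indicator {(0, 0), (0, 2), (1, 0)})) (grid_V m 3)"
proof (rule inj_on_vstring_grid_indicator3)
  fix u v
  assume "u \<in> grid_V m 3" "v \<in> grid_V m 3"
    and eq: "{#manhattan u (0, 0), manhattan u (0, 2), manhattan u (1, 0)#} =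
      {#manhattan v (0, 0), manhattan v (0, 2), manhattan v (1, 0)#}"
  then obtain i j i' j' where ij: "u = (i, j)" "v = (i', j')" "j < 3" "j' < 3"
    by (auto simp: grid_V_def)
  have "{#int i + int j, int i + \<bar>int j - 2\<bar>, \<bar>int i - 1\<bar> + int j#} =
      {#int i' + int j', int i' + \<bar>int j' - 2\<bar>, \<bar>int i' - 1\<bar> + int j'#}"
    using arg_cong[OF eq, of "image_mset int"] unfolding ij by (simp add: int_manhattan)
  from width3_grid_distances_inj[OF this] show "u = v"
    using ij by simp
qed (use assms in \<open>auto simp: grid_V_def\<close>)

lemma width2_grid_resolving_triple:
  assumes "3 \<le> m"
  shows "inj_on (vstring (grid_V m 2) grid_E (indicator {(0, 0), (0, 1), (2, 0)})) (grid_V m 2)"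
proof (rule inj_on_vstring_grid_indicator3)
  fix u v
  assume "u \<in> grid_V m 2" "v \<in> grid_V m 2"
    and eq: "{#manhattan u (0, 0), manhattan u (0, 1), manhattan u (2, 0)#} =
      {#manhattan v (0, 0), manhattan v (0, 1), manhattan v (2, 0)#}"
  then obtain i j i' j' where ij: "u = (i, j)" "v = (i', j')" "j < 2" "j' < 2"
    by (auto simp: grid_V_def)
  have "{#int i + int j, int i + \<bar>int j - 1\<bar>, \<bar>int i - 2\<bar> + int j#} =
      {#int i' + int j', int i' + \<bar>int j' - 1\<bar>, \<bar>int i' - 2\<bar> + int j'#}"
    using arg_cong[OF eq, of "image_mset int"] unfolding ij by (simp add: int_manhattan)
  from width2_grid_distances_inj[OF this] show "u = v"
    using ij by simp
qed (use assms in \<open>auto simp: grid_V_def\<close>)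

lemma grid_two_valued_resolving:
  assumes "2 \<le> m" "2 \<le> n" "\<not> (m = 2 \<and> n = 2)"
  shows "\<exists>f. card (f ` grid_V m n) = 2 \<and> inj_on (vstring (grid_V m n) grid_E f) (grid_V m n)"
proof -
  have "\<exists>S. (0, 0) \<in> S \<and> (1, 1) \<notin> S \<and> S \<subseteq> grid_V m n \<and>
      inj_on (vstring (grid_V m n) grid_E (indicator S)) (grid_V m n)"
  proof -
    consider "4 \<le> n" | "n = 3" | "n = 2" "3 \<le> m"
      using assms by linarith
    then show ?thesis
    proof cases
      case 1
      then show ?thesis
        using assms width_ge4_grid_resolving_triple[of n m]
        by (intro exI[of _ "{(0, 0), (0, 1), (0, n - 1)}"]) (auto simp: grid_V_def)
    next
      case 2
      then show ?thesis
        using assms width3_grid_resolving_triple[of m]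
        by (intro exI[of _ "{(0, 0), (0, 2), (1, 0)}"]) (auto simp: grid_V_def)
    next
      case 3
      then show ?thesis
        using width2_grid_resolving_triple[of m]
        by (intro exI[of _ "{(0, 0), (0, 1), (2, 0)}"]) (auto simp: grid_V_def)
    qed
  qed
  then obtain S where "(0, 0) \<in> S" "(1, 1) \<notin> S" "S \<subseteq> grid_V m n"
    and "inj_on (vstring (grid_V m n) grid_E (indicator S)) (grid_V m n)"
    by blast
  moreover have "(1, 1) \<in> grid_V m n"
    using assms by (simp add: grid_V_def)
  ultimately show ?thesis
    by (intro exI[of _ "indicator S"]) (simp add: card_indicator_image)
qed

lemma grid_2_2_three_valued_resolving:
  "\<exists>f. card (f ` grid_V 2 2) = 3 \<and> inj_on (vstring (grid_V 2 2) grid_E f) (grid_V 2 2)"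
proof (intro exI conjI)
  \<comment> \<open>strings: (2, 1), (1, 2), (1, 0), (2, 0) at (0, 0), (0, 1), (1, 0), (1, 1)\<close>
  let ?f = "\<lambda>w. if w = (1, 0) then 2 else if w = (1, 1) then 1 else 0 :: real"
  show "card (?f ` grid_V 2 2) = 3"
    by (simp add: grid_V_2_2)
  show "inj_on (vstring (grid_V 2 2) grid_E ?f) (grid_V 2 2)"
  proof (rule inj_onI)
    fix u v
    assume uv: "u \<in> grid_V 2 2" "v \<in> grid_V 2 2"
      and "vstring (grid_V 2 2) grid_E ?f u = vstring (grid_V 2 2) grid_E ?f v"
    then have "\<forall>k\<ge>1. layer_sum (grid_V 2 2) grid_E ?f u k = layer_sum (grid_V 2 2) grid_E ?f v k"
      by (simp add: vstring_eq_iff[OF finite_grid_V])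
    then have "layer_sum (grid_V 2 2) grid_E ?f u 1 = layer_sum (grid_V 2 2) grid_E ?f v 1"
      and "layer_sum (grid_V 2 2) grid_E ?f u 2 = layer_sum (grid_V 2 2) grid_E ?f v 2"
      by simp_all
    with uv show "u = v"
      by (simp add: layer_sum_grid) (auto simp: grid_V_2_2 manhattan_def)
  qed
qed

section \<open>Lower bounds from symmetries\<close>

lemma grid_symmetry_not_inj_on:
  assumes "\<forall>x\<in>grid_V m n. \<sigma> x \<in> grid_V m n \<and> \<sigma> (\<sigma> x) = x \<and> f (\<sigma> x) = f x"
    and "\<forall>x\<in>grid_V m n. \<forall>y\<in>grid_V m n. manhattan (\<sigma> x) (\<sigma> y) = manhattan x y"
    and "u \<in> grid_V m n" "\<sigma> u \<noteq> u"
  shows "\<not> inj_on (vstring (grid_V m n) grid_E f) (grid_V m n)"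
proof
  assume inj: "inj_on (vstring (grid_V m n) grid_E f) (grid_V m n)"
  have "bij_betw \<sigma> (grid_V m n) (grid_V m n)"
    by (rule bij_betw_byWitness[where f' = \<sigma>]) (use assms(1) in auto)
  then have "vstring (grid_V m n) grid_E f (\<sigma> u) = vstring (grid_V m n) grid_E f u"
    by (rule vstring_automorphism) (use assms in \<open>simp_all add: gdist_grid\<close>)
  from inj_onD[OF inj this] assms show False
    by simp
qed

lemma manhattan_reflect:
  assumes "a < m" "c < m"
  shows "manhattan (m - Suc a, b) (m - Suc c, d) = manhattan (a, b) (c, d)"
  using assms by (simp add: manhattan_def of_nat_diff abs_minus_commute)

lemma grid_card_image_ge_2:
  assumes "2 \<le> m" "0 < n" "inj_on (vstring (grid_V m n) grid_E f) (grid_V m n)"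
  shows "2 \<le> card (f ` grid_V m n)"
proof (rule ccontr)
  assume "\<not> 2 \<le> card (f ` grid_V m n)"
  then have "card (f ` grid_V m n) \<le> Suc 0" by simp
  then have single_value: "\<forall>a\<in>f ` grid_V m n. \<forall>b\<in>f ` grid_V m n. a = b"
    by (rule iffD1[OF card_le_Suc0_iff_eq[OF finite_imageI[OF finite_grid_V]]])
  have origin: "(0, 0) \<in> grid_V m n"
    using assms(1,2) by (simp add: grid_V_def)
  define c where "c = f (0, 0)"
  have const: "f x = c" if "x \<in> grid_V m n" for x
    unfolding c_def using bspec[OF bspec[OF single_value imageI[OF that]] imageI[OF origin]] .
  have "\<not> inj_on (vstring (grid_V m n) grid_E f) (grid_V m n)"
    using assms(1,2)
    by (intro grid_symmetry_not_inj_on[where \<sigma> = "\<lambda>(i, j). (m - Suc i, j)" and u = "(0, 0)"])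
      (auto simp: grid_V_def manhattan_reflect const)
  with assms(3) show False by contradiction
qed

lemma card_le_2_four_cases:
  assumes "card {a, b, c, d} \<le> 2"
  shows "a = c \<or> b = d \<or> (a = b \<and> c = d) \<or> (a = d \<and> b = c)"
  using assms by (auto simp: card_insert_if split: if_splits)

lemma grid_2_2_card_image_ge_3:
  assumes "inj_on (vstring (grid_V 2 2) grid_E f) (grid_V 2 2)"
  shows "3 \<le> card (f ` grid_V 2 2)"
proof (rule ccontr)
  assume "\<not> 3 \<le> card (f ` grid_V 2 2)"
  then have card_le_2: "card {f (0, 0), f (0, 1), f (1, 1), f (1, 0)} \<le> 2"
    by (simp add: grid_V_2_2 insert_commute)
  \<comment> \<open>in each case one of the four reflections of the square preserves f\<close>
  consider "f (0, 0) = f (1, 1)" | "f (0, 1) = f (1, 0)"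
    | "f (0, 0) = f (0, 1)" "f (1, 1) = f (1, 0)" | "f (0, 0) = f (1, 0)" "f (0, 1) = f (1, 1)"
    using card_le_2_four_cases[OF card_le_2] by blast
  then have "\<not> inj_on (vstring (grid_V 2 2) grid_E f) (grid_V 2 2)"
  proof cases
    case 1
    then show ?thesis
      by (intro grid_symmetry_not_inj_on[where \<sigma> = "\<lambda>(i, j). (1 - j, 1 - i)" and u = "(0, 0)"])
        (simp_all add: grid_V_2_2 manhattan_def)
  next
    case 2
    then show ?thesis
      by (intro grid_symmetry_not_inj_on[where \<sigma> = "\<lambda>(i, j). (j, i)" and u = "(0, 1)"])
        (simp_all add: grid_V_2_2 manhattan_def)
  next
    case 3
    then show ?thesis
      by (intro grid_symmetry_not_inj_on[where \<sigma> = "\<lambda>(i, j). (i, 1 - j)" and u = "(0, 0)"])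
        (simp_all add: grid_V_2_2 manhattan_def)
  next
    case 4
    then show ?thesis
      by (intro grid_symmetry_not_inj_on[where \<sigma> = "\<lambda>(i, j). (1 - i, j)" and u = "(0, 0)"])
        (simp_all add: grid_V_2_2 manhattan_def)
  qed
  with assms show False by blast
qed

theorem mainTheorem8:
  fixes m n :: nat
  assumes "m \<ge> 2" and "n \<ge> 2"
  shows "IDI (grid_V m n) grid_E = (if m = 2 \<and> n = 2 then 3 else 2)"
proof (cases "m = 2 \<and> n = 2")
  case True
  have "IDI (grid_V 2 2) grid_E = 3"
    using grid_2_2_three_valued_resolving grid_2_2_card_image_ge_3 by (rule IDI_eqI)
  with True show ?thesis by simp
next
  case False
  have "IDI (grid_V m n) grid_E = 2"
    using grid_two_valued_resolving[OF assms False] by (rule IDI_eqI) (use assms grid_card_image_ge_2 in simp)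
  with False show ?thesis by simp
qed

end
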